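(* Let $H\subset G$ be a subgroup which maps surjectively onto $K$ under the canonical map $p:G\to K$. Then the generator $e\in\mathbb{Z}\subset G$ belongs to $H$.
   Context: Let $\mathrm{Hig}=\langle a,b,c,d\mid a^{-1}ba=b^2,\ b^{-1}cb=c^2,\ c^{-1}dc=d^2,\ d^{-1}ad=a^2\rangle$ be the Higman group, fix $z\in\mathrm{Hig}$ of infinite order and let $K=\mathrm{Hig}*_{\langle z\rangle}\mathrm{Hig}$ (amalgamated free product along $\langle z\rangle$). One has $H^2(K;\mathbb{Z})\cong\mathbb{Z}$; let $\gamma$ be a generator and let $1\to\mathbb{Z}\to L\to K\to1$ be the central extension classified by $\gamma$. Let $1\to\mathbb{Z}\to N\to\mathbb{Z}^2\to1$ be the central extension classified by a generator of $H^2(\mathbb{Z}^2;\mathbb{Z})\cong\mathbb{Z}$. Embed $\mathbb{Z}$ diagonally as a central subgroup of $N\times L$ (via the two central subgroups $\mathbb{Z}$) and set $G=(N\times L)/\mathbb{Z}$. Regard $N\subset G$ via $n\mapsto[(n,1)]$ and $\mathbb{Z}\subset N\subset G$ (central subgroup of $N$); $e$ denotes a generator of this $\mathbb{Z}$. The canonical map $p:G\to K$ is $[(n,l)]\mapsto$ image of $l$ under $L\to L/\mathbb{Z}=K$. *)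

theory Defs
  imports "HOL-Algebra.Coset"
begin

text \<open>Words over generators 'a: a letter (x,True) is x, (x,False) is x inverse.\<close>

type_synonym 'a word = "('a \<times> bool) list"

definition inv_word :: "'a word \<Rightarrow> 'a word" where
  "inv_word w = rev (map (\<lambda>(x,b). (x, \<not> b)) w)"

definition map_word :: "('a \<Rightarrow> 'b) \<Rightarrow> 'a word \<Rightarrow> 'b word" where
  "map_word f w = map (\<lambda>(x,b). (f x, b)) w"

inductive pres_eq :: "'a word set \<Rightarrow> 'a word \<Rightarrow> 'a word \<Rightarrow> bool" for R where
  refl: "pres_eq R w w"
| sym: "pres_eq R u v \<Longrightarrow> pres_eq R v u"
| trans: "pres_eq R u v \<Longrightarrow> pres_eq R v w \<Longrightarrow> pres_eq R u w"
| cancel: "pres_eq R (u @ [(x,b),(x,\<not> b)] @ v) (u @ v)"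
| relator: "r \<in> R \<Longrightarrow> pres_eq R (u @ r @ v) (u @ v)"

definition pres_group :: "'a word set \<Rightarrow> ('a word set) monoid" where
  "pres_group R = \<lparr> carrier = range (\<lambda>w. {v. pres_eq R w v}),
                    mult = (\<lambda>A B. {v. \<exists>a\<in>A. \<exists>b\<in>B. pres_eq R (a @ b) v}),
                    one = {v. pres_eq R [] v} \<rparr>"

datatype hgen = Ga | Gb | Gc | Gd

text \<open>Relator of x^-1 y x = y^2, i.e. x^-1 y x y^-1 y^-1.\<close>
definition hig_relator :: "hgen \<Rightarrow> hgen \<Rightarrow> hgen word" where
  "hig_relator x y = [(x,False),(y,True),(x,True),(y,False),(y,False)]"

definition hig_rels :: "hgen word set" where
  "hig_rels = {hig_relator Ga Gb, hig_relator Gb Gc, hig_relator Gc Gd, hig_relator Gd Ga}"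

definition Hig :: "hgen word set monoid" where
  "Hig = pres_group hig_rels"

text \<open>K = Hig *_<z> Hig: two copies of Hig, with the two copies of z identified.\<close>
definition amalg_rels :: "hgen word set \<Rightarrow> (hgen + hgen) word set" where
  "amalg_rels z = (let w = (SOME w. w \<in> z) in
      map_word Inl ` hig_rels \<union> map_word Inr ` hig_rels
      \<union> {map_word Inl w @ inv_word (map_word Inr w)})"

definition Kam :: "hgen word set \<Rightarrow> (hgen + hgen) word set monoid" where
  "Kam z = pres_group (amalg_rels z)"

definition cocycle2 :: "('g,'m) monoid_scheme \<Rightarrow> ('g \<Rightarrow> 'g \<Rightarrow> int) \<Rightarrow> bool" where
  "cocycle2 K f \<longleftrightarrow> (\<forall>g\<in>carrier K. \<forall>h\<in>carrier K. \<forall>k\<in>carrier K.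
      f g h + f (g \<otimes>\<^bsub>K\<^esub> h) k = f h k + f g (h \<otimes>\<^bsub>K\<^esub> k))"

definition coboundary2 :: "('g,'m) monoid_scheme \<Rightarrow> ('g \<Rightarrow> 'g \<Rightarrow> int) \<Rightarrow> bool" where
  "coboundary2 K f \<longleftrightarrow> (\<exists>\<phi> :: 'g \<Rightarrow> int. \<forall>g\<in>carrier K. \<forall>h\<in>carrier K.
      f g h = \<phi> g + \<phi> h - \<phi> (g \<otimes>\<^bsub>K\<^esub> h))"

definition H2_generator :: "('g,'m) monoid_scheme \<Rightarrow> ('g \<Rightarrow> 'g \<Rightarrow> int) \<Rightarrow> bool" where
  "H2_generator K f \<longleftrightarrow> cocycle2 K f \<and>
     (\<forall>f'. cocycle2 K f' \<longrightarrow> (\<exists>n::int. coboundary2 K (\<lambda>g h. f' g h - n * f g h)))"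

text \<open>The central extension 1 -> Z -> Z x_f K -> K -> 1 classified by the cocycle f.\<close>
definition ext_group :: "('g,'m) monoid_scheme \<Rightarrow> ('g \<Rightarrow> 'g \<Rightarrow> int) \<Rightarrow> (int \<times> 'g) monoid" where
  "ext_group K f = \<lparr> carrier = UNIV \<times> carrier K,
      mult = (\<lambda>(m,g) (n,h). (m + n + f g h, g \<otimes>\<^bsub>K\<^esub> h)),
      one = (- f \<one>\<^bsub>K\<^esub> \<one>\<^bsub>K\<^esub>, \<one>\<^bsub>K\<^esub>) \<rparr>"

definition ext_central :: "('g,'m) monoid_scheme \<Rightarrow> ('g \<Rightarrow> 'g \<Rightarrow> int) \<Rightarrow> int \<Rightarrow> int \<times> 'g" where
  "ext_central K f n = (n - f \<one>\<^bsub>K\<^esub> \<one>\<^bsub>K\<^esub>, \<one>\<^bsub>K\<^esub>)"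

definition Z2 :: "(int \<times> int) monoid" where
  "Z2 = \<lparr> carrier = UNIV, mult = (\<lambda>(a,b) (c,d). (a + c, b + d)), one = (0,0) \<rparr>"

definition NL :: "hgen word set \<Rightarrow> _ \<Rightarrow> _ \<Rightarrow> _" where
  "NL z fK fN = ext_group Z2 fN \<times>\<times> ext_group (Kam z) fK"

definition diagZ :: "hgen word set \<Rightarrow> _ \<Rightarrow> _ \<Rightarrow> _" where
  "diagZ z fK fN = {(ext_central Z2 fN n, ext_central (Kam z) fK n) | n. True}"

definition Ggrp :: "hgen word set \<Rightarrow> _ \<Rightarrow> _ \<Rightarrow> _" where
  "Ggrp z fK fN = NL z fK fN Mod diagZ z fK fN"

definition e_elem :: "hgen word set \<Rightarrow> _ \<Rightarrow> _ \<Rightarrow> _" where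
  "e_elem z fK fN = diagZ z fK fN #>\<^bsub>NL z fK fN\<^esub>
      (ext_central Z2 fN 1, \<one>\<^bsub>ext_group (Kam z) fK\<^esub>)"

definition p_map :: "(('n \<times> (int \<times> 'k)) set) \<Rightarrow> 'k" where
  "p_map X = (THE k. \<exists>x\<in>X. snd (snd x) = k)"

end

(*
  Let U be the preimage of H in N x L. It contains the diagonal copy of Z and maps onto K.
  Every Higman generator y is the commutator of x^-1 and y for its neighbour x, so K is perfect,
  while N is a central extension of the abelian group Z^2. Hence commutators of U, corrected by
  diagonal central elements, show that already the fibre S = {l. (1, l) in U} maps onto K.
  Now S meets the centre of L in mZ, and a section of S -> K exhibits the class gamma of L as
  cohomologous to m times a class n gamma. If gamma has infinite order then mn = 1, so the
  generator of the centre lies in S and e lies in H.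

  That gamma has infinite order is witnessed by another cocycle. K acts on Hig x Z modulo
  translations of Z: the first copy of Hig by left multiplication, the second one by left
  multiplication corrected by a translation number beta with beta(z x) = beta(x) + 1, so that
  the two copies of z act alike up to the shift by 1. If k times the resulting class were a
  coboundary, its restriction to each copy of Hig would give a homomorphism Hig -> Z, which
  vanishes as Hig is perfect; evaluating at the two copies of z then forces k = 0.
*)

theory Submission
  imports Defs "HOL-Algebra.Generated_Groups"
begin

section \<open>Presentations\<close>

definition pres_class :: "'a word set \<Rightarrow> 'a word \<Rightarrow> 'a word set" where
  "pres_class R w = {v. pres_eq R w v}"

definition pres_rep :: "'a word set \<Rightarrow> 'a word" where
  "pres_rep X = (SOME w. w \<in> X)"

lemma pres_eq_append_cong: "pres_eq R u v \<Longrightarrow> pres_eq R (p @ u @ q) (p @ v @ q)"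
proof (induction rule: pres_eq.induct)
  case (cancel u x b v)
  show ?case using pres_eq.cancel[of R "p @ u" x b "v @ q"] by simp
next
  case (relator r u v)
  show ?case using pres_eq.relator[OF relator, of "p @ u" "v @ q"] by simp
next
  case (sym u v)
  show ?case by (rule pres_eq.sym[OF sym.IH])
next
  case (trans u v w)
  show ?case by (rule pres_eq.trans[OF trans.IH])
qed (rule pres_eq.refl)

lemma pres_eq_append: "pres_eq R a a' \<Longrightarrow> pres_eq R b b' \<Longrightarrow> pres_eq R (a @ b) (a' @ b')"
  using pres_eq_append_cong[of R a a' "[]" b] pres_eq_append_cong[of R b b' a' "[]"]
  by (metis append_Nil append_Nil2 pres_eq.trans)

lemma pres_class_eq_iff: "pres_class R u = pres_class R v \<longleftrightarrow> pres_eq R u v"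
proof
  assume "pres_class R u = pres_class R v"
  then show "pres_eq R u v" by (auto simp: pres_class_def intro: pres_eq.refl)
next
  assume "pres_eq R u v"
  then show "pres_class R u = pres_class R v"
    unfolding pres_class_def by (auto intro: pres_eq.trans pres_eq.sym)
qed

lemma pres_class_self: "w \<in> pres_class R w"
  by (simp add: pres_class_def pres_eq.refl)

lemma pres_class_of_mem: "v \<in> pres_class R w \<Longrightarrow> pres_class R v = pres_class R w"
  unfolding pres_class_eq_iff by (simp add: pres_class_def pres_eq.sym)

lemma pres_class_rep: "pres_class R (pres_rep (pres_class R w)) = pres_class R w"
  unfolding pres_rep_def by (rule pres_class_of_mem, rule someI, rule pres_class_self)

lemma pres_eq_pres_rep: "pres_eq R w (pres_rep (pres_class R w))"
  using pres_class_rep[of R w] by (simp add: pres_class_eq_iff pres_eq.sym)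

lemma carrier_pres_group: "carrier (pres_group R) = range (pres_class R)"
  by (simp add: pres_group_def pres_class_def[abs_def])

lemma one_pres_group: "\<one>\<^bsub>pres_group R\<^esub> = pres_class R []"
  by (simp add: pres_group_def pres_class_def)

lemma mult_pres_group:
  "pres_class R a \<otimes>\<^bsub>pres_group R\<^esub> pres_class R b = pres_class R (a @ b)"
proof -
  have "{v. \<exists>a'\<in>pres_class R a. \<exists>b'\<in>pres_class R b. pres_eq R (a' @ b') v} = pres_class R (a @ b)"
    unfolding pres_class_def by (blast intro: pres_eq.refl pres_eq.trans pres_eq_append)
  then show ?thesis by (simp add: pres_group_def)
qed

lemma inv_word_Nil [simp]: "inv_word [] = []"
  by (simp add: inv_word_def)

lemma pres_eq_inv_word_cancel: "pres_eq R (inv_word w @ w) []"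
proof (induction w)
  case (Cons l w)
  obtain x b where l: "l = (x, b)" by force
  have "pres_eq R (inv_word w @ [(x, \<not> b), (x, \<not> \<not> b)] @ w) (inv_word w @ w)"
    by (rule pres_eq.cancel)
  moreover have "inv_word (l # w) @ l # w = inv_word w @ [(x, \<not> b), (x, \<not> \<not> b)] @ w"
    using l by (simp add: inv_word_def)
  ultimately show ?case using Cons.IH by (metis pres_eq.trans)
qed (simp add: pres_eq.refl)

lemma group_pres_group: "group (pres_group R)"
proof (rule groupI)
  fix x
  assume "x \<in> carrier (pres_group R)"
  then obtain w where "x = pres_class R w" by (auto simp: carrier_pres_group)
  then show "\<exists>y\<in>carrier (pres_group R). y \<otimes>\<^bsub>pres_group R\<^esub> x = \<one>\<^bsub>pres_group R\<^esub>"
    by (intro bexI[of _ "pres_class R (inv_word w)"])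
      (auto simp: carrier_pres_group mult_pres_group one_pres_group pres_class_eq_iff
        pres_eq_inv_word_cancel)
qed (auto simp: carrier_pres_group mult_pres_group one_pres_group)

lemma inv_pres_group: "inv\<^bsub>pres_group R\<^esub> (pres_class R w) = pres_class R (inv_word w)"
  by (rule group.inv_equality[OF group_pres_group])
    (auto simp: carrier_pres_group mult_pres_group one_pres_group pres_class_eq_iff
      pres_eq_inv_word_cancel)

lemma pres_class_relator: "r \<in> R \<Longrightarrow> pres_class R r = pres_class R []"
  using pres_eq.relator[of r R "[]" "[]"] by (simp add: pres_class_eq_iff)

lemma map_word_Nil [simp]: "map_word f [] = []"
  by (simp add: map_word_def)

lemma map_word_Cons [simp]: "map_word f ((y, b) # w) = (f y, b) # map_word f w"
  by (simp add: map_word_def)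

lemma map_word_append: "map_word f (u @ v) = map_word f u @ map_word f v"
  by (simp add: map_word_def)

lemma inv_word_map_word: "inv_word (map_word f w) = map_word f (inv_word w)"
  by (simp add: inv_word_def map_word_def rev_map case_prod_beta)

lemma pres_eq_map_word:
  assumes "\<And>r. r \<in> R \<Longrightarrow> map_word f r \<in> R'" and "pres_eq R u v"
  shows "pres_eq R' (map_word f u) (map_word f v)"
  using assms(2)
proof (induction rule: pres_eq.induct)
  case (cancel u x b v)
  show ?case
    using pres_eq.cancel[of R' "map_word f u" "f x" b "map_word f v"] by (simp add: map_word_append)
next
  case (relator r u v)
  show ?case
    using pres_eq.relator[OF assms(1)[OF relator], of "map_word f u" "map_word f v"]
    by (simp add: map_word_append)
next
  case (sym u v)
  show ?case by (rule pres_eq.sym[OF sym.IH])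
next
  case (trans u v w)
  show ?case by (rule pres_eq.trans[OF trans.IH])
qed (rule pres_eq.refl)

section \<open>Perfect groups\<close>

definition perfect :: "('a, 'b) monoid_scheme \<Rightarrow> bool" where
  "perfect G \<longleftrightarrow> derived G (carrier G) = carrier G"

lemma perfectI: "group G \<Longrightarrow> carrier G \<subseteq> derived G (carrier G) \<Longrightarrow> perfect G"
  unfolding perfect_def using group.derived_in_carrier by blast

lemma perfect_additive_zero:
  fixes \<phi> :: "'a \<Rightarrow> 'c::ab_group_add"
  assumes "group G" "perfect G"
    and additive: "\<And>x y. x \<in> carrier G \<Longrightarrow> y \<in> carrier G \<Longrightarrow> \<phi> (x \<otimes>\<^bsub>G\<^esub> y) = \<phi> x + \<phi> y"
    and x: "x \<in> carrier G"
  shows "\<phi> x = 0"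
proof -
  interpret group G by fact
  have one: "\<phi> \<one>\<^bsub>G\<^esub> = 0" using additive[of "\<one>\<^bsub>G\<^esub>" "\<one>\<^bsub>G\<^esub>"] by simp
  have inv: "\<phi> (inv\<^bsub>G\<^esub> y) = - \<phi> y" if "y \<in> carrier G" for y
    using additive[of y "inv\<^bsub>G\<^esub> y"] that one by (simp add: eq_neg_iff_add_eq_0 add.commute)
  define V where "V = {y \<in> carrier G. \<phi> y = 0}"
  have "subgroup V G"
    by (rule subgroupI) (auto simp: V_def one inv additive)
  moreover have "derived_set G (carrier G) \<subseteq> V"
    by (auto simp: V_def additive inv)
  ultimately have "derived G (carrier G) \<subseteq> V"
    unfolding derived_def by (intro generate_subgroup_incl)
  then show ?thesis using assms(2) x by (auto simp: perfect_def V_def)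
qed

lemma pres_eq_conj_square_commutator:
  assumes "[(x, False), (y, True), (x, True), (y, False), (y, False)] \<in> R"
  shows "pres_eq R [(x, False), (y, True), (x, True), (y, False)] [(y, True)]"
proof -
  have "pres_eq R [(x, False), (y, True), (x, True), (y, False), (y, False), (y, True)]
      [(x, False), (y, True), (x, True), (y, False)]"
    using pres_eq.cancel[of R "[(x, False), (y, True), (x, True), (y, False)]" y False "[]"] by simp
  moreover have "pres_eq R [(x, False), (y, True), (x, True), (y, False), (y, False), (y, True)]
      [(y, True)]"
    using pres_eq.relator[OF assms, of "[]" "[(y, True)]"] by simp
  ultimately show ?thesis by (rule pres_eq.trans[OF pres_eq.sym])
qed

lemma perfect_pres_group:
  assumes conj_square: "\<And>y. \<exists>x. [(x, False), (y, True), (x, True), (y, False), (y, False)] \<in> R"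
  shows "perfect (pres_group R)"
proof -
  interpret group "pres_group R" by (rule group_pres_group)
  let ?c = "pres_class R"
  let ?D = "derived (pres_group R) (carrier (pres_group R))"
  have D: "subgroup ?D (pres_group R)" by (rule derived_is_subgroup) simp
  have letter: "?c [(y, True)] \<in> ?D" for y
  proof -
    obtain x where "[(x, False), (y, True), (x, True), (y, False), (y, False)] \<in> R"
      using conj_square by blast
    \<comment> \<open>the relator \<open>x\<inverse> y x y\<inverse> y\<inverse>\<close> makes \<open>y\<close> the commutator of \<open>x\<inverse>\<close> and \<open>y\<close>\<close>
    from pres_eq_conj_square_commutator[OF this]
    have "?c [(y, True)] = ?c [(x, False)] \<otimes>\<^bsub>pres_group R\<^esub> ?c [(y, True)]
        \<otimes>\<^bsub>pres_group R\<^esub> inv\<^bsub>pres_group R\<^esub> ?c [(x, False)] \<otimes>\<^bsub>pres_group R\<^esub> inv\<^bsub>pres_group R\<^esub> ?c [(y, True)]"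
      by (simp add: mult_pres_group inv_pres_group inv_word_def pres_class_eq_iff pres_eq.sym)
    also have "\<dots> \<in> ?D"
      unfolding derived_def by (rule generate.incl) (auto simp: carrier_pres_group)
    finally show ?thesis .
  qed
  have "?c w \<in> ?D" for w
  proof (induction w)
    case Nil
    show ?case using subgroup.one_closed[OF D] by (simp add: one_pres_group)
  next
    case (Cons l w)
    obtain y b where l: "l = (y, b)" by force
    have "?c [l] \<in> ?D"
      using letter[of y] subgroup.m_inv_closed[OF D letter[of y]] l
      by (cases b) (simp_all add: inv_pres_group inv_word_def)
    then have "?c [l] \<otimes>\<^bsub>pres_group R\<^esub> ?c w \<in> ?D" using Cons D by (simp add: subgroup.m_closed)
    then show ?case by (simp add: mult_pres_group)
  qed
  then show ?thesis by (intro perfectI group_pres_group) (auto simp: carrier_pres_group)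
qed

lemma pres_word_additive_zero:
  fixes L :: "'a word \<Rightarrow> 'c::ab_group_add"
  assumes "perfect (pres_group R)"
    and additive: "\<And>u v. L (u @ v) = L u + L v"
    and invariant: "\<And>u v. pres_eq R u v \<Longrightarrow> L u = L v"
  shows "L w = 0"
proof -
  have L_rep: "L (pres_rep (pres_class R u)) = L u" for u
    using invariant[OF pres_eq_pres_rep] by simp
  have "(\<lambda>X. L (pres_rep X)) (pres_class R w) = 0"
  proof (rule perfect_additive_zero[OF group_pres_group assms(1)])
    fix X Y assume "X \<in> carrier (pres_group R)" "Y \<in> carrier (pres_group R)"
    then show "L (pres_rep (X \<otimes>\<^bsub>pres_group R\<^esub> Y)) = L (pres_rep X) + L (pres_rep Y)"
      by (auto simp: carrier_pres_group mult_pres_group L_rep additive)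
  qed (simp add: carrier_pres_group)
  then show ?thesis by (simp add: L_rep)
qed

section \<open>Central extensions and second cohomology\<close>

lemma carrier_ext_group: "carrier (ext_group K f) = UNIV \<times> carrier K"
  by (simp add: ext_group_def)

lemma mult_ext_group [simp]:
  "(m, g) \<otimes>\<^bsub>ext_group K f\<^esub> (n, h) = (m + n + f g h, g \<otimes>\<^bsub>K\<^esub> h)"
  by (simp add: ext_group_def)

lemma one_ext_group [simp]: "\<one>\<^bsub>ext_group K f\<^esub> = (- f \<one>\<^bsub>K\<^esub> \<one>\<^bsub>K\<^esub>, \<one>\<^bsub>K\<^esub>)"
  by (simp add: ext_group_def)

lemma cocycle2D:
  "cocycle2 K f \<Longrightarrow> g \<in> carrier K \<Longrightarrow> h \<in> carrier K \<Longrightarrow> k \<in> carrier K \<Longrightarrow>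
    f g h + f (g \<otimes>\<^bsub>K\<^esub> h) k = f h k + f g (h \<otimes>\<^bsub>K\<^esub> k)"
  unfolding cocycle2_def by blast

lemma cocycle2_one_left:
  assumes "group K" "cocycle2 K f" "k \<in> carrier K"
  shows "f \<one>\<^bsub>K\<^esub> k = f \<one>\<^bsub>K\<^esub> \<one>\<^bsub>K\<^esub>"
  using cocycle2D[OF assms(2), of "\<one>\<^bsub>K\<^esub>" "\<one>\<^bsub>K\<^esub>" k] assms(3) group.is_monoid[OF assms(1)]
  by simp

lemma cocycle2_one_right:
  assumes "group K" "cocycle2 K f" "g \<in> carrier K"
  shows "f g \<one>\<^bsub>K\<^esub> = f \<one>\<^bsub>K\<^esub> \<one>\<^bsub>K\<^esub>"
  using cocycle2D[OF assms(2), of g "\<one>\<^bsub>K\<^esub>" "\<one>\<^bsub>K\<^esub>"] assms(3) group.is_monoid[OF assms(1)]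
  by simp

lemma group_ext_group:
  assumes "group K" "cocycle2 K f"
  shows "group (ext_group K f)"
proof -
  interpret K: group K by fact
  show ?thesis
  proof (rule groupI)
    fix x y w
    assume "x \<in> carrier (ext_group K f)" "y \<in> carrier (ext_group K f)" "w \<in> carrier (ext_group K f)"
    moreover obtain a g b h c k where "x = (a, g)" "y = (b, h)" "w = (c, k)"
      by (cases x, cases y, cases w) auto
    ultimately show "x \<otimes>\<^bsub>ext_group K f\<^esub> y \<otimes>\<^bsub>ext_group K f\<^esub> w =
        x \<otimes>\<^bsub>ext_group K f\<^esub> (y \<otimes>\<^bsub>ext_group K f\<^esub> w)"
      using cocycle2D[OF assms(2), of g h k] by (simp add: K.m_assoc carrier_ext_group; linarith)
  next
    fix x
    assume "x \<in> carrier (ext_group K f)"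
    then obtain a g where x: "x = (a, g)" "g \<in> carrier K" by (auto simp: carrier_ext_group)
    show "\<one>\<^bsub>ext_group K f\<^esub> \<otimes>\<^bsub>ext_group K f\<^esub> x = x"
      using cocycle2_one_left[OF assms x(2)] x by simp
  next
    fix x
    assume "x \<in> carrier (ext_group K f)"
    then obtain a g where x: "x = (a, g)" "g \<in> carrier K" by (auto simp: carrier_ext_group)
    let ?y = "(- f \<one>\<^bsub>K\<^esub> \<one>\<^bsub>K\<^esub> - a - f (inv\<^bsub>K\<^esub> g) g, inv\<^bsub>K\<^esub> g)"
    show "\<exists>y\<in>carrier (ext_group K f). y \<otimes>\<^bsub>ext_group K f\<^esub> x = \<one>\<^bsub>ext_group K f\<^esub>"
      using x by (intro bexI[of _ ?y]) (simp_all add: carrier_ext_group)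
  qed (auto simp: carrier_ext_group)
qed

lemma group_hom_snd_ext_group:
  assumes "group K" "cocycle2 K f"
  shows "group_hom (ext_group K f) K snd"
  unfolding group_hom_def group_hom_axioms_def
  by (auto intro!: homI simp: assms group_ext_group carrier_ext_group)

lemma ext_central_carrier [simp]: "group K \<Longrightarrow> ext_central K f a \<in> carrier (ext_group K f)"
  by (simp add: ext_central_def group.is_monoid carrier_ext_group)

lemma ext_central_zero: "ext_central K f 0 = \<one>\<^bsub>ext_group K f\<^esub>"
  by (simp add: ext_central_def)

lemma ext_central_mult_left:
  assumes "group K" "cocycle2 K f" "x \<in> carrier (ext_group K f)"
  shows "ext_central K f a \<otimes>\<^bsub>ext_group K f\<^esub> x = (a + fst x, snd x)"
  using assms cocycle2_one_left[OF assms(1,2), of "snd x"] group.is_monoid[OF assms(1)]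
  by (cases x) (simp add: ext_central_def carrier_ext_group)

lemma ext_central_mult_right:
  assumes "group K" "cocycle2 K f" "x \<in> carrier (ext_group K f)"
  shows "x \<otimes>\<^bsub>ext_group K f\<^esub> ext_central K f a = (a + fst x, snd x)"
  using assms cocycle2_one_right[OF assms(1,2), of "snd x"] group.is_monoid[OF assms(1)]
  by (cases x) (simp add: ext_central_def carrier_ext_group)

lemma ext_central_mult:
  assumes "group K" "cocycle2 K f"
  shows "ext_central K f a \<otimes>\<^bsub>ext_group K f\<^esub> ext_central K f b = ext_central K f (a + b)"
  using ext_central_mult_left[OF assms ext_central_carrier[OF assms(1)]]
  by (simp add: ext_central_def)

lemma inv_ext_central:
  assumes "group K" "cocycle2 K f"
  shows "inv\<^bsub>ext_group K f\<^esub> (ext_central K f a) = ext_central K f (- a)"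
  using ext_central_mult[OF assms, of "- a" a]
  by (intro group.inv_equality[OF group_ext_group[OF assms]]) (simp_all add: ext_central_zero assms(1))

lemma ext_central_of_snd_one:
  assumes "group K" "x \<in> carrier (ext_group K f)" "snd x = \<one>\<^bsub>K\<^esub>"
  shows "x = ext_central K f (fst x + f \<one>\<^bsub>K\<^esub> \<one>\<^bsub>K\<^esub>)"
  using assms by (cases x) (simp add: ext_central_def carrier_ext_group)

definition infinite_order_class :: "('g, 'm) monoid_scheme \<Rightarrow> ('g \<Rightarrow> 'g \<Rightarrow> int) \<Rightarrow> bool" where
  "infinite_order_class K f \<longleftrightarrow> (\<forall>k::int. k \<noteq> 0 \<longrightarrow> \<not> coboundary2 K (\<lambda>g h. k * f g h))"

lemma coboundary2_delta: "coboundary2 K (\<lambda>g h. \<phi> g + \<phi> h - \<phi> (g \<otimes>\<^bsub>K\<^esub> h))"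
  unfolding coboundary2_def by (intro exI[of _ \<phi>]) simp

lemma coboundary2_add:
  assumes "coboundary2 K f" "coboundary2 K f'"
  shows "coboundary2 K (\<lambda>g h. f g h + f' g h)"
proof -
  obtain \<phi> \<phi>' where "\<forall>g\<in>carrier K. \<forall>h\<in>carrier K. f g h = \<phi> g + \<phi> h - \<phi> (g \<otimes>\<^bsub>K\<^esub> h)"
    "\<forall>g\<in>carrier K. \<forall>h\<in>carrier K. f' g h = \<phi>' g + \<phi>' h - \<phi>' (g \<otimes>\<^bsub>K\<^esub> h)"
    using assms unfolding coboundary2_def by blast
  then show ?thesis
    unfolding coboundary2_def by (intro exI[of _ "\<lambda>g. \<phi> g + \<phi>' g"]) auto
qed

lemma coboundary2_scale:
  assumes "coboundary2 K f"
  shows "coboundary2 K (\<lambda>g h. k * f g h)"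
proof -
  obtain \<phi> where \<phi>: "\<forall>g\<in>carrier K. \<forall>h\<in>carrier K. f g h = \<phi> g + \<phi> h - \<phi> (g \<otimes>\<^bsub>K\<^esub> h)"
    using assms unfolding coboundary2_def by blast
  have "k * f g h = k * \<phi> g + k * \<phi> h - k * \<phi> (g \<otimes>\<^bsub>K\<^esub> h)" if "g \<in> carrier K" "h \<in> carrier K" for g h
    using \<phi> that by (simp add: right_diff_distrib distrib_left)
  then show ?thesis
    unfolding coboundary2_def by (intro exI[of _ "\<lambda>g. k * \<phi> g"]) blast
qed

lemma coboundary2_cong:
  assumes "coboundary2 K f" "\<And>g h. g \<in> carrier K \<Longrightarrow> h \<in> carrier K \<Longrightarrow> f g h = f' g h"
  shows "coboundary2 K f'"
proof -
  obtain \<phi> where "\<forall>g\<in>carrier K. \<forall>h\<in>carrier K. f g h = \<phi> g + \<phi> h - \<phi> (g \<otimes>\<^bsub>K\<^esub> h)"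
    using assms(1) unfolding coboundary2_def by blast
  then show ?thesis
    using assms(2) unfolding coboundary2_def by (intro exI[of _ \<phi>]) simp
qed

lemma infinite_order_class_of_generator:
  assumes "H2_generator K f" "cocycle2 K c" "infinite_order_class K c"
  shows "infinite_order_class K f"
  unfolding infinite_order_class_def
proof (intro allI impI notI)
  fix k :: int
  assume "k \<noteq> 0" and cob: "coboundary2 K (\<lambda>g h. k * f g h)"
  obtain n where "coboundary2 K (\<lambda>g h. c g h - n * f g h)"
    using assms(1,2) by (auto simp: H2_generator_def)
  from coboundary2_add[OF coboundary2_scale[OF this, of k] coboundary2_scale[OF cob, of n]]
  have "coboundary2 K (\<lambda>g h. k * c g h)"
    by (rule coboundary2_cong) (simp add: algebra_simps)
  with assms(3) \<open>k \<noteq> 0\<close> show False unfolding infinite_order_class_def by blast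
qed

lemma cocycle2_add_delta:
  assumes "group K" "cocycle2 K f"
  shows "cocycle2 K (\<lambda>g h. f g h + \<phi> g + \<phi> h - \<phi> (g \<otimes>\<^bsub>K\<^esub> h))"
  unfolding cocycle2_def
proof (intro ballI)
  fix g h k
  assume "g \<in> carrier K" "h \<in> carrier K" "k \<in> carrier K"
  with cocycle2D[OF assms(2) this] group.is_monoid[OF assms(1)]
  show "f g h + \<phi> g + \<phi> h - \<phi> (g \<otimes>\<^bsub>K\<^esub> h) + (f (g \<otimes>\<^bsub>K\<^esub> h) k + \<phi> (g \<otimes>\<^bsub>K\<^esub> h) + \<phi> k - \<phi> (g \<otimes>\<^bsub>K\<^esub> h \<otimes>\<^bsub>K\<^esub> k)) =
      f h k + \<phi> h + \<phi> k - \<phi> (h \<otimes>\<^bsub>K\<^esub> k) + (f g (h \<otimes>\<^bsub>K\<^esub> k) + \<phi> g + \<phi> (h \<otimes>\<^bsub>K\<^esub> k) - \<phi> (g \<otimes>\<^bsub>K\<^esub> (h \<otimes>\<^bsub>K\<^esub> k)))"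
    by (simp add: monoid.m_assoc)
qed

text \<open>For \<open>m = 0\<close> the quotient is the zero cocycle, since \<open>c div 0 = 0\<close>.\<close>

lemma cocycle2_div:
  assumes "group K" "cocycle2 K c" "\<And>g h. g \<in> carrier K \<Longrightarrow> h \<in> carrier K \<Longrightarrow> m dvd c g h"
  shows "cocycle2 K (\<lambda>g h. c g h div m)"
proof (cases "m = 0")
  case False
  show ?thesis
    unfolding cocycle2_def
  proof (intro ballI)
    fix g h k
    assume carrier: "g \<in> carrier K" "h \<in> carrier K" "k \<in> carrier K"
    moreover have "m dvd c (g \<otimes>\<^bsub>K\<^esub> h) k" "m dvd c g (h \<otimes>\<^bsub>K\<^esub> k)"
      using assms(3) carrier group.is_monoid[OF assms(1)] by (simp_all add: monoid.m_closed)
    ultimately have "m * (c g h div m + c (g \<otimes>\<^bsub>K\<^esub> h) k div m) = m * (c h k div m + c g (h \<otimes>\<^bsub>K\<^esub> k) div m)"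
      using cocycle2D[OF assms(2) carrier] assms(3) by (simp add: distrib_left dvd_mult_div_cancel)
    then show "c g h div m + c (g \<otimes>\<^bsub>K\<^esub> h) k div m = c h k div m + c g (h \<otimes>\<^bsub>K\<^esub> k) div m"
      using False by simp
  qed
qed (simp add: cocycle2_def)

section \<open>Subgroups of a central extension mapping onto the quotient\<close>

lemma int_additive_subgroup_mult:
  fixes I :: "int set"
  assumes zero: "0 \<in> I" and add: "\<And>a b. a \<in> I \<Longrightarrow> b \<in> I \<Longrightarrow> a + b \<in> I"
    and neg: "\<And>a. a \<in> I \<Longrightarrow> - a \<in> I" and "a \<in> I"
  shows "k * a \<in> I"
proof -
  have nat_mult: "int j * a \<in> I" for j
  proof (induction j)
    case (Suc j)
    show ?case using add[OF assms(4) Suc] by (simp add: distrib_right)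
  qed (simp add: zero)
  show ?thesis
  proof (cases "k \<ge> 0")
    case True
    then show ?thesis using nat_mult[of "nat k"] by simp
  next
    case False
    then show ?thesis using neg[OF nat_mult[of "nat (- k)"]] by simp
  qed
qed

lemma int_additive_subgroup_cyclic:
  fixes I :: "int set"
  assumes zero: "0 \<in> I" and add: "\<And>a b. a \<in> I \<Longrightarrow> b \<in> I \<Longrightarrow> a + b \<in> I"
    and neg: "\<And>a. a \<in> I \<Longrightarrow> - a \<in> I"
  obtains m where "m \<ge> 0" "m \<in> I" "\<And>b. b \<in> I \<Longrightarrow> m dvd b"
proof (cases "I \<subseteq> {0}")
  case True
  then show ?thesis using that[of 0] zero by auto
next
  case False
  have mult: "k * a \<in> I" if "a \<in> I" for k a
    using zero add neg that by (rule int_additive_subgroup_mult)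
  obtain a where "a \<in> I" "a \<noteq> 0" using False by blast
  then have "\<exists>n::nat. n > 0 \<and> int n \<in> I"
    using neg by (intro exI[of _ "nat \<bar>a\<bar>"]) (auto simp: abs_if)
  then have m0: "(LEAST n::nat. n > 0 \<and> int n \<in> I) > 0 \<and> int (LEAST n::nat. n > 0 \<and> int n \<in> I) \<in> I"
    by (rule LeastI_ex)
  define m where "m = int (LEAST n::nat. n > 0 \<and> int n \<in> I)"
  have m: "m > 0" "m \<in> I" using m0 by (simp_all add: m_def)
  have "m dvd b" if b: "b \<in> I" for b
  proof (rule ccontr)
    assume "\<not> m dvd b"
    then have pos: "b mod m > 0" using m(1) by (simp add: dvd_eq_mod_eq_0 order_le_neq_trans)
    have "b mod m = b + (- (b div m)) * m" by (simp add: minus_div_mult_eq_mod[symmetric])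
    then have "int (nat (b mod m)) \<in> I" using add[OF b mult[OF m(2), of "- (b div m)"]] pos by simp
    then have "(LEAST n::nat. n > 0 \<and> int n \<in> I) \<le> nat (b mod m)" using pos by (intro Least_le) simp
    then have "m \<le> b mod m" using pos by (simp add: m_def)
    then show False using pos_mod_bound[OF m(1), of b] by linarith
  qed
  then show ?thesis using that[of m] m by simp
qed

lemma ext_central_subgroup_cyclic:
  assumes K: "group K" and coc: "cocycle2 K f" and S: "subgroup S (ext_group K f)"
  obtains m where "m \<ge> 0" "ext_central K f m \<in> S" "\<And>b. ext_central K f b \<in> S \<Longrightarrow> m dvd b"
proof (rule int_additive_subgroup_cyclic[of "{n. ext_central K f n \<in> S}"])
  interpret S: subgroup S "ext_group K f" by (rule S)
  show "0 \<in> {n. ext_central K f n \<in> S}"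
    using S.one_closed by (simp add: ext_central_zero del: one_ext_group)
  show "a + b \<in> {n. ext_central K f n \<in> S}"
    if "a \<in> {n. ext_central K f n \<in> S}" "b \<in> {n. ext_central K f n \<in> S}" for a b
    using that S.m_closed by (simp add: ext_central_mult[OF K coc, symmetric])
  show "- a \<in> {n. ext_central K f n \<in> S}" if "a \<in> {n. ext_central K f n \<in> S}" for a
    using that S.m_inv_closed by (simp add: inv_ext_central[OF K coc, symmetric])
qed (use that in blast)

lemma ext_central_section_defect_mem:
  assumes K: "group K" and coc: "cocycle2 K f" and S: "subgroup S (ext_group K f)"
    and "(a, g) \<in> S" "(b, h) \<in> S" "(c, g \<otimes>\<^bsub>K\<^esub> h) \<in> S"
  shows "ext_central K f (f g h + a + b - c) \<in> S"
proof -
  interpret E: group "ext_group K f" by (rule group_ext_group[OF K coc])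
  interpret S: subgroup S "ext_group K f" by (rule S)
  let ?x = "(a, g) \<otimes>\<^bsub>ext_group K f\<^esub> (b, h)" and ?y = "(c, g \<otimes>\<^bsub>K\<^esub> h)"
  have xy: "?x \<in> S" "?y \<in> S" using assms(4-6) S.m_closed by (simp_all del: mult_ext_group)
  have "?x = ext_central K f (f g h + a + b - c) \<otimes>\<^bsub>ext_group K f\<^esub> ?y"
    using S.mem_carrier[OF xy(2)] by (simp add: ext_central_mult_left[OF K coc] carrier_ext_group)
  then have "ext_central K f (f g h + a + b - c) = ?x \<otimes>\<^bsub>ext_group K f\<^esub> inv\<^bsub>ext_group K f\<^esub> ?y"
    using E.inv_solve_right[OF ext_central_carrier[OF K] S.mem_carrier[OF xy(1)] S.mem_carrier[OF xy(2)]]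
    by simp
  also have "\<dots> \<in> S" using xy by simp
  finally show ?thesis .
qed

lemma ext_central_one_mem_of_surjective:
  assumes K: "group K" and gen: "H2_generator K f" and inf: "infinite_order_class K f"
    and S: "subgroup S (ext_group K f)" and surj: "\<And>g. g \<in> carrier K \<Longrightarrow> \<exists>s\<in>S. snd s = g"
  shows "ext_central K f 1 \<in> S"
proof -
  have coc: "cocycle2 K f" using gen by (simp add: H2_generator_def)
  obtain m where m: "m \<ge> 0" "ext_central K f m \<in> S" "\<And>b. ext_central K f b \<in> S \<Longrightarrow> m dvd b"
    using ext_central_subgroup_cyclic[OF K coc S] by blast
  have "\<forall>g\<in>carrier K. \<exists>a. (a, g) \<in> S"
    using surj by (metis prod.collapse)
  then obtain \<phi> where \<phi>: "\<And>g. g \<in> carrier K \<Longrightarrow> (\<phi> g, g) \<in> S"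
    by (metis bchoice)
  define D where "D g h = f g h + \<phi> g + \<phi> h - \<phi> (g \<otimes>\<^bsub>K\<^esub> h)" for g h
  have m_dvd_D: "m dvd D g h" if "g \<in> carrier K" "h \<in> carrier K" for g h
    unfolding D_def using that \<phi> group.is_monoid[OF K]
    by (intro m(3) ext_central_section_defect_mem[OF K coc S]) (simp_all add: monoid.m_closed)
  \<comment> \<open>\<open>D\<close> is cohomologous to \<open>f\<close> and divisible by \<open>m\<close>, so \<open>f \<sim> m (D div m) \<sim> m n f\<close>.\<close>
  have "cocycle2 K D"
    using cocycle2_add_delta[OF K coc, of \<phi>] by (simp add: D_def[abs_def])
  then have "cocycle2 K (\<lambda>g h. D g h div m)"
    by (rule cocycle2_div[OF K _ m_dvd_D])
  then obtain n where "coboundary2 K (\<lambda>g h. D g h div m - n * f g h)"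
    using gen unfolding H2_generator_def by blast
  from coboundary2_add[OF coboundary2_delta[of K "\<lambda>g. - \<phi> g"] coboundary2_scale[OF this, of m]]
  have "coboundary2 K (\<lambda>g h. (1 - m * n) * f g h)"
  proof (rule coboundary2_cong)
    fix g h assume "g \<in> carrier K" "h \<in> carrier K"
    then have "m * (D g h div m) = D g h" using m_dvd_D by simp
    then show "- \<phi> g + - \<phi> h - - \<phi> (g \<otimes>\<^bsub>K\<^esub> h) + m * (D g h div m - n * f g h) = (1 - m * n) * f g h"
      unfolding right_diff_distrib by (simp add: D_def algebra_simps)
  qed
  then have "m * n = 1" using inf unfolding infinite_order_class_def by (metis eq_iff_diff_eq_0)
  then have "m = 1" using m(1) by (simp add: zmult_eq_1_iff)
  then show ?thesis using m(2) by simp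
qed

section \<open>The quotient of a product of central extensions by the diagonal centre\<close>

definition central_diag ::
  "('a, 'm) monoid_scheme \<Rightarrow> ('a \<Rightarrow> 'a \<Rightarrow> int) \<Rightarrow> ('k, 'n) monoid_scheme \<Rightarrow> ('k \<Rightarrow> 'k \<Rightarrow> int) \<Rightarrow>
    ((int \<times> 'a) \<times> (int \<times> 'k)) set" where
  "central_diag A fA K fK = {(ext_central A fA n, ext_central K fK n) | n. True}"

lemma ext_commutator_central:
  assumes "comm_group A" "cocycle2 A f" "x \<in> carrier (ext_group A f)" "y \<in> carrier (ext_group A f)"
  shows "\<exists>t. x \<otimes>\<^bsub>ext_group A f\<^esub> y \<otimes>\<^bsub>ext_group A f\<^esub> inv\<^bsub>ext_group A f\<^esub> x
      \<otimes>\<^bsub>ext_group A f\<^esub> inv\<^bsub>ext_group A f\<^esub> y = ext_central A f t"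
proof -
  interpret A: comm_group A by fact
  interpret snd: group_hom "ext_group A f" A snd by (rule group_hom_snd_ext_group[OF A.is_group assms(2)])
  let ?c = "x \<otimes>\<^bsub>ext_group A f\<^esub> y \<otimes>\<^bsub>ext_group A f\<^esub> inv\<^bsub>ext_group A f\<^esub> x
      \<otimes>\<^bsub>ext_group A f\<^esub> inv\<^bsub>ext_group A f\<^esub> y"
  have sx: "snd x \<in> carrier A" "snd y \<in> carrier A" using assms(3,4) by (auto simp: carrier_ext_group)
  have "snd ?c = snd x \<otimes>\<^bsub>A\<^esub> snd y \<otimes>\<^bsub>A\<^esub> inv\<^bsub>A\<^esub> snd x \<otimes>\<^bsub>A\<^esub> inv\<^bsub>A\<^esub> snd y"
    using assms(3,4) by (simp add: snd.hom_mult snd.hom_inv del: mult_ext_group)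
  also have "\<dots> = \<one>\<^bsub>A\<^esub>"
    using sx by (simp add: A.m_assoc A.m_lcomm[of "snd y" "inv\<^bsub>A\<^esub> snd x"])
  finally show ?thesis
    using ext_central_of_snd_one[OF A.is_group, of ?c] snd.G.m_closed snd.G.inv_closed assms(3,4) by blast
qed

lemma subgroup_DirProd_fiber_one:
  assumes "group G" "group H" "subgroup U (G \<times>\<times> H)"
  shows "subgroup {h \<in> carrier H. (\<one>\<^bsub>G\<^esub>, h) \<in> U} H"
proof -
  interpret G: group G by fact
  interpret H: group H by fact
  interpret U: subgroup U "G \<times>\<times> H" by fact
  show ?thesis
  proof (rule H.subgroupI)
    fix a b
    assume "a \<in> {h \<in> carrier H. (\<one>\<^bsub>G\<^esub>, h) \<in> U}" "b \<in> {h \<in> carrier H. (\<one>\<^bsub>G\<^esub>, h) \<in> U}"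
    then have a: "a \<in> carrier H" "(\<one>\<^bsub>G\<^esub>, a) \<in> U" and b: "b \<in> carrier H" "(\<one>\<^bsub>G\<^esub>, b) \<in> U"
      by auto
    show "inv\<^bsub>H\<^esub> a \<in> {h \<in> carrier H. (\<one>\<^bsub>G\<^esub>, h) \<in> U}"
      using U.m_inv_closed[OF a(2)] a(1) by (simp add: inv_DirProd[OF G.is_group H.is_group])
    show "a \<otimes>\<^bsub>H\<^esub> b \<in> {h \<in> carrier H. (\<one>\<^bsub>G\<^esub>, h) \<in> U}"
      using U.m_closed[OF a(2) b(2)] a(1) b(1) by simp
  qed (use U.one_closed in auto)
qed

text \<open>With \<open>A = \<int>\<^sup>2\<close> and \<open>K\<close> the amalgam, \<open>P Mod Z\<close> below is the group \<open>G\<close> of the theorem.\<close>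

locale central_product =
  fixes A :: "('a, 'm) monoid_scheme" and fA :: "'a \<Rightarrow> 'a \<Rightarrow> int"
    and K :: "('k, 'n) monoid_scheme" and fK :: "'k \<Rightarrow> 'k \<Rightarrow> int"
  assumes comm_group_A: "comm_group A" and cocycle_A: "cocycle2 A fA"
    and group_K: "group K" and cocycle_K: "cocycle2 K fK"
begin

abbreviation N where "N \<equiv> ext_group A fA"
abbreviation L where "L \<equiv> ext_group K fK"
abbreviation P where "P \<equiv> N \<times>\<times> L"
abbreviation Z where "Z \<equiv> central_diag A fA K fK"
abbreviation cA where "cA \<equiv> ext_central A fA"
abbreviation cK where "cK \<equiv> ext_central K fK"

lemma group_A: "group A"
  using comm_group_A by (rule comm_group.axioms(2))

sublocale N: group N by (rule group_ext_group[OF group_A cocycle_A])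
sublocale L: group L by (rule group_ext_group[OF group_K cocycle_K])
sublocale P: group P by (rule DirProd_group[OF N.is_group L.is_group])

lemma central_diag_mem: "(cA n, cK n) \<in> Z"
  by (auto simp: central_diag_def)

lemma central_diagE:
  assumes "d \<in> Z"
  obtains n where "d = (cA n, cK n)"
  using assms by (auto simp: central_diag_def)

lemma central_diag_carrier: "(cA n, cK n) \<in> carrier P"
  by (simp add: group_A group_K)

lemma central_diag_mult: "(cA a, cK a) \<otimes>\<^bsub>P\<^esub> (cA b, cK b) = (cA (a + b), cK (a + b))"
  by (simp add: ext_central_mult[OF group_A cocycle_A] ext_central_mult[OF group_K cocycle_K]
      del: mult_ext_group)

lemma central_diag_inv: "inv\<^bsub>P\<^esub> (cA a, cK a) = (cA (- a), cK (- a))"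
  using group_A group_K
  by (simp add: inv_DirProd[OF N.is_group L.is_group] inv_ext_central[OF group_A cocycle_A]
      inv_ext_central[OF group_K cocycle_K])

lemma central_diag_central:
  assumes "x \<in> carrier P"
  shows "(cA n, cK n) \<otimes>\<^bsub>P\<^esub> x = x \<otimes>\<^bsub>P\<^esub> (cA n, cK n)"
  using assms
  by (cases x) (simp add: ext_central_mult_left[OF group_A cocycle_A] ext_central_mult_right[OF group_A cocycle_A]
      ext_central_mult_left[OF group_K cocycle_K] ext_central_mult_right[OF group_K cocycle_K]
      del: mult_ext_group)

lemma central_diag_normal: "Z \<lhd> P"
proof -
  have "subgroup Z P"
  proof (rule P.subgroupI)
    show "Z \<subseteq> carrier P" using central_diag_carrier by (auto elim!: central_diagE simp del: carrier_DirProd)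
    show "Z \<noteq> {}" using central_diag_mem by blast
    fix a b
    assume "a \<in> Z" "b \<in> Z"
    then obtain m n where "a = (cA m, cK m)" "b = (cA n, cK n)" by (metis central_diagE)
    then show "inv\<^bsub>P\<^esub> a \<in> Z" "a \<otimes>\<^bsub>P\<^esub> b \<in> Z"
      by (simp_all only: central_diag_inv central_diag_mult central_diag_mem)
  qed
  moreover have "x \<otimes>\<^bsub>P\<^esub> d \<otimes>\<^bsub>P\<^esub> inv\<^bsub>P\<^esub> x \<in> Z" if x: "x \<in> carrier P" and "d \<in> Z" for x d
  proof -
    obtain n where d: "d = (cA n, cK n)" using \<open>d \<in> Z\<close> by (rule central_diagE)
    have "x \<otimes>\<^bsub>P\<^esub> d \<otimes>\<^bsub>P\<^esub> inv\<^bsub>P\<^esub> x = d \<otimes>\<^bsub>P\<^esub> x \<otimes>\<^bsub>P\<^esub> inv\<^bsub>P\<^esub> x"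
      unfolding d by (simp only: central_diag_central[OF x])
    also have "\<dots> = d"
      using x central_diag_carrier[of n] unfolding d
      by (simp only: P.m_assoc P.inv_closed P.r_inv P.r_one)
    finally show ?thesis using \<open>d \<in> Z\<close> by simp
  qed
  ultimately show ?thesis by (simp add: P.normal_inv_iff)
qed

lemma p_map_rcos_central_diag:
  assumes x: "x \<in> carrier P"
  shows "p_map (Z #>\<^bsub>P\<^esub> x) = snd (snd x)"
  unfolding p_map_def
proof (rule the_equality)
  have "x \<in> Z #>\<^bsub>P\<^esub> x"
    using P.rcos_self[OF x normal_imp_subgroup[OF central_diag_normal]] .
  then show "\<exists>y\<in>Z #>\<^bsub>P\<^esub> x. snd (snd y) = snd (snd x)" by blast
next
  fix k
  assume "\<exists>y\<in>Z #>\<^bsub>P\<^esub> x. snd (snd y) = k"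
  then obtain d where "d \<in> Z" "k = snd (snd (d \<otimes>\<^bsub>P\<^esub> x))"
    unfolding r_coset_def by blast
  then obtain n where "k = snd (snd ((cA n, cK n) \<otimes>\<^bsub>P\<^esub> x))"
    by (metis central_diagE)
  then show "k = snd (snd x)"
    using x by (cases x) (simp add: ext_central_mult_left[OF group_K cocycle_K] del: mult_ext_group)
qed

lemma commutator_in_fiber:
  assumes U: "subgroup U P" "Z \<subseteq> U" and uv: "u \<in> U" "v \<in> U"
  shows "\<exists>l. (\<one>\<^bsub>N\<^esub>, l) \<in> U \<and> snd l = snd (snd u) \<otimes>\<^bsub>K\<^esub> snd (snd v)
      \<otimes>\<^bsub>K\<^esub> inv\<^bsub>K\<^esub> snd (snd u) \<otimes>\<^bsub>K\<^esub> inv\<^bsub>K\<^esub> snd (snd v)"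
proof -
  interpret U: subgroup U P by (rule U(1))
  interpret snd: group_hom L K snd by (rule group_hom_snd_ext_group[OF group_K cocycle_K])
  obtain u1 u2 v1 v2 where u: "u = (u1, u2)" "u1 \<in> carrier N" "u2 \<in> carrier L"
    and v: "v = (v1, v2)" "v1 \<in> carrier N" "v2 \<in> carrier L"
    using U.mem_carrier[OF uv(1)] U.mem_carrier[OF uv(2)] by auto
  obtain t where t: "u1 \<otimes>\<^bsub>N\<^esub> v1 \<otimes>\<^bsub>N\<^esub> inv\<^bsub>N\<^esub> u1 \<otimes>\<^bsub>N\<^esub> inv\<^bsub>N\<^esub> v1 = cA t"
    using ext_commutator_central[OF comm_group_A cocycle_A u(2) v(2)] by blast
  define l where "l = u2 \<otimes>\<^bsub>L\<^esub> v2 \<otimes>\<^bsub>L\<^esub> inv\<^bsub>L\<^esub> u2 \<otimes>\<^bsub>L\<^esub> inv\<^bsub>L\<^esub> v2"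
  have l: "l \<in> carrier L" using u v by (simp add: l_def del: carrier_ext_group)
  have "u \<otimes>\<^bsub>P\<^esub> v \<otimes>\<^bsub>P\<^esub> inv\<^bsub>P\<^esub> u \<otimes>\<^bsub>P\<^esub> inv\<^bsub>P\<^esub> v = (cA t, l)"
    using u v t by (simp add: l_def inv_DirProd[OF N.is_group L.is_group] del: mult_ext_group)
  then have "(cA t, l) \<in> U" using uv by (metis U.m_closed U.m_inv_closed)
  then have "(cA (- t), cK (- t)) \<otimes>\<^bsub>P\<^esub> (cA t, l) \<in> U"
    using U(2) central_diag_mem by (blast intro: U.m_closed)
  moreover have "(cA (- t), cK (- t)) \<otimes>\<^bsub>P\<^esub> (cA t, l) = (\<one>\<^bsub>N\<^esub>, cK (- t) \<otimes>\<^bsub>L\<^esub> l)"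
    by (simp add: ext_central_mult[OF group_A cocycle_A] ext_central_zero del: mult_ext_group one_ext_group)
  moreover have "snd (cK (- t) \<otimes>\<^bsub>L\<^esub> l) = snd l"
    using ext_central_mult_left[OF group_K cocycle_K l] by simp
  moreover have "snd l = snd u2 \<otimes>\<^bsub>K\<^esub> snd v2 \<otimes>\<^bsub>K\<^esub> inv\<^bsub>K\<^esub> snd u2 \<otimes>\<^bsub>K\<^esub> inv\<^bsub>K\<^esub> snd v2"
    using u v by (simp add: l_def snd.hom_mult snd.hom_inv del: mult_ext_group carrier_ext_group)
  ultimately show ?thesis
    using u v by (intro exI[of _ "cK (- t) \<otimes>\<^bsub>L\<^esub> l"]) (simp del: one_ext_group)
qed

lemma fiber_surjective:
  assumes "perfect K" and U: "subgroup U P" "Z \<subseteq> U"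
    and surj: "\<And>g. g \<in> carrier K \<Longrightarrow> \<exists>x\<in>U. snd (snd x) = g" and g: "g \<in> carrier K"
  shows "\<exists>l. (\<one>\<^bsub>N\<^esub>, l) \<in> U \<and> snd l = g"
proof -
  interpret K: group K by (rule group_K)
  interpret snd: group_hom L K snd by (rule group_hom_snd_ext_group[OF group_K cocycle_K])
  define S where "S = {l \<in> carrier L. (\<one>\<^bsub>N\<^esub>, l) \<in> U}"
  have "subgroup S L"
    unfolding S_def by (rule subgroup_DirProd_fiber_one[OF N.is_group L.is_group U(1)])
  then have V: "subgroup (snd ` S) K" by (rule snd.subgroup_img_is_subgroup)
  have "derived_set K (carrier K) \<subseteq> snd ` S"
  proof (intro subsetI, elim UN_E singletonE)
    fix g h c
    assume "g \<in> carrier K" "h \<in> carrier K" and c: "c = g \<otimes>\<^bsub>K\<^esub> h \<otimes>\<^bsub>K\<^esub> inv\<^bsub>K\<^esub> g \<otimes>\<^bsub>K\<^esub> inv\<^bsub>K\<^esub> h"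
    then obtain u v where "u \<in> U" "v \<in> U" "snd (snd u) = g" "snd (snd v) = h" using surj by metis
    then obtain l where "(\<one>\<^bsub>N\<^esub>, l) \<in> U" "snd l = c" using commutator_in_fiber[OF U] c by metis
    moreover have "l \<in> carrier L" using subgroup.mem_carrier[OF U(1) \<open>(\<one>\<^bsub>N\<^esub>, l) \<in> U\<close>] by simp
    ultimately show "c \<in> snd ` S" by (auto simp: S_def)
  qed
  then have "derived K (carrier K) \<subseteq> snd ` S"
    unfolding derived_def by (rule K.generate_subgroup_incl[OF _ V])
  then have "g \<in> snd ` S" using assms(1) g by (simp add: perfect_def subset_eq)
  then show ?thesis by (auto simp: S_def)
qed

lemma fiber_ext_central_one_mem:
  assumes "perfect K" "H2_generator K fK" "infinite_order_class K fK"
    and U: "subgroup U P" "Z \<subseteq> U" and surj: "\<And>g. g \<in> carrier K \<Longrightarrow> \<exists>x\<in>U. snd (snd x) = g"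
  shows "(\<one>\<^bsub>N\<^esub>, cK 1) \<in> U"
proof -
  have "cK 1 \<in> {l \<in> carrier L. (\<one>\<^bsub>N\<^esub>, l) \<in> U}"
  proof (rule ext_central_one_mem_of_surjective[OF group_K assms(2,3)
        subgroup_DirProd_fiber_one[OF N.is_group L.is_group U(1)]])
    fix g
    assume "g \<in> carrier K"
    then obtain l where l: "(\<one>\<^bsub>N\<^esub>, l) \<in> U" "snd l = g"
      using fiber_surjective[OF assms(1) U surj] by blast
    moreover have "l \<in> carrier L" using subgroup.mem_carrier[OF U(1) l(1)] by simp
    ultimately show "\<exists>s\<in>{l \<in> carrier L. (\<one>\<^bsub>N\<^esub>, l) \<in> U}. snd s = g" by blast
  qed
  then show ?thesis by simp
qed

lemma Union_subgroup_Mod_central_diag: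
  assumes H: "subgroup H (P Mod Z)" and surj: "p_map ` H = carrier K"
  shows "subgroup (\<Union>H) P" "Z \<subseteq> \<Union>H" "\<And>g. g \<in> carrier K \<Longrightarrow> \<exists>x\<in>\<Union>H. snd (snd x) = g"
    and "x \<in> \<Union>H \<longleftrightarrow> x \<in> carrier P \<and> Z #>\<^bsub>P\<^esub> x \<in> H"
proof -
  interpret normal Z P by (rule central_diag_normal)
  show "subgroup (\<Union>H) P" by (rule factgroup_subgroup_union_subgroup[OF H])
  show U_iff: "x \<in> \<Union>H \<longleftrightarrow> x \<in> carrier P \<and> Z #>\<^bsub>P\<^esub> x \<in> H" for x
    using factgroup_subgroup_union_char[OF H] by blast
  show "Z \<subseteq> \<Union>H"
  proof
    fix d assume "d \<in> Z"
    moreover have "Z \<in> H" using subgroup.one_closed[OF H] by simp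
    moreover have "d \<in> carrier P" using subset \<open>d \<in> Z\<close> by blast
    ultimately show "d \<in> \<Union>H" unfolding U_iff using rcos_const[OF P.is_group \<open>d \<in> Z\<close>] by simp
  qed
  fix g
  assume "g \<in> carrier K"
  then have "g \<in> p_map ` H" using surj by simp
  then obtain X where X: "X \<in> H" "g = p_map X" by (rule imageE)
  then have "X \<in> carrier (P Mod Z)" using subgroup.subset[OF H] by blast
  then obtain x where x: "x \<in> carrier P" "X = Z #>\<^bsub>P\<^esub> x" unfolding carrier_FactGroup by blast
  then have "x \<in> \<Union>H" using X(1) U_iff by simp
  then show "\<exists>x\<in>\<Union>H. snd (snd x) = g"
    using X(2) x p_map_rcos_central_diag[OF x(1)] by (intro bexI[of _ x]) simp_all
qed

theorem central_generator_mem: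
  assumes "perfect K" "H2_generator K fK" "infinite_order_class K fK"
    and H: "subgroup H (P Mod Z)" and surj: "p_map ` H = carrier K"
  shows "Z #>\<^bsub>P\<^esub> (cA 1, \<one>\<^bsub>L\<^esub>) \<in> H"
proof -
  note U = Union_subgroup_Mod_central_diag[OF H surj]
  have "(\<one>\<^bsub>N\<^esub>, cK 1) \<in> \<Union>H"
    by (rule fiber_ext_central_one_mem[OF assms(1-3) U(1-3)])
  moreover have "(cA 1, cK 1) \<in> \<Union>H" using U(2) central_diag_mem by blast
  ultimately have "(cA 1, cK 1) \<otimes>\<^bsub>P\<^esub> inv\<^bsub>P\<^esub> (\<one>\<^bsub>N\<^esub>, cK 1) \<in> \<Union>H"
    by (intro subgroup.m_closed[OF U(1)] subgroup.m_inv_closed[OF U(1)]) simp_all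
  moreover have "(cA 1, cK 1) \<otimes>\<^bsub>P\<^esub> inv\<^bsub>P\<^esub> (\<one>\<^bsub>N\<^esub>, cK 1) = (cA 1, \<one>\<^bsub>L\<^esub>)"
    using group_A group_K
    by (simp add: inv_DirProd[OF N.is_group L.is_group] del: mult_ext_group one_ext_group)
  ultimately have "(cA 1, \<one>\<^bsub>L\<^esub>) \<in> \<Union>H" by (simp only:)
  then show ?thesis unfolding U(4) by (rule conjunct2)
qed

end

section \<open>The Higman group and the amalgam\<close>

abbreviation hig_class :: "hgen word \<Rightarrow> hgen word set" where
  "hig_class \<equiv> pres_class hig_rels"

abbreviation kam_class :: "hgen word set \<Rightarrow> (hgen + hgen) word \<Rightarrow> (hgen + hgen) word set" where
  "kam_class z \<equiv> pres_class (amalg_rels z)"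

lemma group_Hig: "group Hig"
  by (simp add: Hig_def group_pres_group)

lemma carrier_Hig: "carrier Hig = range hig_class"
  by (simp add: Hig_def carrier_pres_group)

lemma hig_class_carrier [simp]: "hig_class w \<in> carrier Hig"
  by (simp add: carrier_Hig)

lemma mult_Hig: "hig_class u \<otimes>\<^bsub>Hig\<^esub> hig_class v = hig_class (u @ v)"
  by (simp add: Hig_def mult_pres_group)

lemma one_Hig: "\<one>\<^bsub>Hig\<^esub> = hig_class []"
  by (simp add: Hig_def one_pres_group)

lemma group_Kam: "group (Kam z)"
  by (simp add: Kam_def group_pres_group)

lemma carrier_Kam: "carrier (Kam z) = range (kam_class z)"
  by (simp add: Kam_def carrier_pres_group)

lemma kam_class_carrier [simp]: "kam_class z w \<in> carrier (Kam z)"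
  by (simp add: carrier_Kam)

lemma mult_Kam: "kam_class z u \<otimes>\<^bsub>Kam z\<^esub> kam_class z v = kam_class z (u @ v)"
  by (simp add: Kam_def mult_pres_group)

lemma one_Kam: "\<one>\<^bsub>Kam z\<^esub> = kam_class z []"
  by (simp add: Kam_def one_pres_group)

lemma inv_Kam: "inv\<^bsub>Kam z\<^esub> (kam_class z w) = kam_class z (inv_word w)"
  by (simp add: Kam_def inv_pres_group)

lemma amalg_rels_eq:
  "amalg_rels z = map_word Inl ` hig_rels \<union> map_word Inr ` hig_rels
     \<union> {map_word Inl (pres_rep z) @ map_word Inr (inv_word (pres_rep z))}"
  by (simp add: amalg_rels_def Let_def pres_rep_def inv_word_map_word)

lemma hig_class_pres_rep: "z \<in> carrier Hig \<Longrightarrow> hig_class (pres_rep z) = z"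
  unfolding carrier_Hig by (auto simp: pres_class_rep)

lemma hig_relator_conj_square: "\<exists>x. hig_relator x y \<in> hig_rels"
  by (cases y) (auto simp: hig_rels_def)

lemma perfect_Hig: "perfect Hig"
  unfolding Hig_def
  by (rule perfect_pres_group) (use hig_relator_conj_square in \<open>auto simp: hig_relator_def\<close>)

lemma perfect_Kam: "perfect (Kam z)"
  unfolding Kam_def
proof (rule perfect_pres_group)
  fix y :: "hgen + hgen"
  obtain f y' where f: "f = Inl \<or> f = Inr" and y: "y = f y'" by (cases y) auto
  obtain x where "hig_relator x y' \<in> hig_rels" using hig_relator_conj_square by blast
  then have "map_word f (hig_relator x y') \<in> amalg_rels z" using f by (auto simp: amalg_rels_eq)
  then show "\<exists>x. [(x, False), (y, True), (x, True), (y, False), (y, False)] \<in> amalg_rels z"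
    using y by (auto simp: hig_relator_def)
qed

section \<open>A class of infinite order on the amalgam\<close>

lemma (in group) infinite_order_int_pow_right_inj:
  assumes "z \<in> carrier G" "\<And>n::int. n \<noteq> 0 \<Longrightarrow> z [^] n \<noteq> \<one>"
    and "y \<in> carrier G" "z [^] a \<otimes> y = z [^] (b::int) \<otimes> y"
  shows "a = b"
proof (rule ccontr)
  assume "a \<noteq> b"
  have "z [^] a = z [^] b" using assms(1,3,4) by (simp add: right_cancel)
  then have "z [^] (a - b) = \<one>" using assms(1) by (simp add: int_pow_diff)
  with assms(2) \<open>a \<noteq> b\<close> show False by simp
qed

lemma (in group) int_pow_orbit_shift:
  assumes "z \<in> carrier G" "x \<in> carrier G"
  shows "(\<exists>n::int. y = z [^] n \<otimes> (z \<otimes> x)) \<longleftrightarrow> (\<exists>n::int. y = z [^] n \<otimes> x)"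
proof -
  have eq: "z [^] (n::int) \<otimes> (z \<otimes> x) = z [^] (n + 1) \<otimes> x" for n
    using assms by (simp add: int_pow_mult m_assoc)
  show ?thesis
  proof
    assume "\<exists>n::int. y = z [^] n \<otimes> (z \<otimes> x)"
    then show "\<exists>n::int. y = z [^] n \<otimes> x" using eq by blast
  next
    assume "\<exists>n::int. y = z [^] n \<otimes> x"
    then obtain n :: int where "y = z [^] n \<otimes> x" by blast
    then have "y = z [^] (n - 1) \<otimes> (z \<otimes> x)" using eq[of "n - 1"] by simp
    then show "\<exists>n::int. y = z [^] n \<otimes> (z \<otimes> x)" by blast
  qed
qed

lemma (in group) translation_number_exists:
  assumes "z \<in> carrier G" and inf: "\<And>n::int. n \<noteq> 0 \<Longrightarrow> z [^] n \<noteq> \<one>"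
  obtains \<beta> :: "'a \<Rightarrow> int" where "\<And>x. x \<in> carrier G \<Longrightarrow> \<beta> (z \<otimes> x) = \<beta> x + 1"
proof -
  have pow_inj: "a = b" if "y \<in> carrier G" "z [^] a \<otimes> y = z [^] (b::int) \<otimes> y" for a b y
    using infinite_order_int_pow_right_inj[OF assms(1) inf that] .
  define r where "r x = (SOME y. \<exists>n::int. y = z [^] n \<otimes> x)" for x
  have r: "\<exists>m::int. r x = z [^] m \<otimes> x" for x
    unfolding r_def by (rule someI_ex) (use int_pow_0 in auto)
  have r_shift: "r (z \<otimes> x) = r x" if "x \<in> carrier G" for x
    using int_pow_orbit_shift[OF assms(1) that] by (simp add: r_def)
  define \<beta> where "\<beta> x = (THE n::int. x = z [^] n \<otimes> r x)" for x
  have \<beta>: "x = z [^] \<beta> x \<otimes> r x" and r_carrier: "r x \<in> carrier G" if "x \<in> carrier G" for x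
  proof -
    obtain m :: int where m: "r x = z [^] m \<otimes> x" using r by blast
    then show "r x \<in> carrier G" using that assms(1) by simp
    have x: "x = z [^] (- m) \<otimes> r x"
      using m that assms(1) by (simp add: m_assoc[symmetric] int_pow_mult[symmetric])
    then show "x = z [^] \<beta> x \<otimes> r x"
      unfolding \<beta>_def
    proof (rule theI)
      fix n :: int
      assume "x = z [^] n \<otimes> r x"
      with x show "n = - m" using pow_inj[OF \<open>r x \<in> carrier G\<close>] by simp
    qed
  qed
  show ?thesis
  proof (rule that)
    fix x
    assume x: "x \<in> carrier G"
    then have "z [^] \<beta> (z \<otimes> x) \<otimes> r x = z \<otimes> x"
      using \<beta>[of "z \<otimes> x"] r_shift assms(1) by simp
    also have "\<dots> = z [^] (\<beta> x + 1) \<otimes> r x"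
      using \<beta>[OF x] assms(1) r_carrier[OF x]
      by (metis int_pow_1 int_pow_closed int_pow_mult m_assoc add.commute)
    finally show "\<beta> (z \<otimes> x) = \<beta> x + 1" by (rule pow_inj[OF r_carrier[OF x]])
  qed
qed

fun letter_action ::
  "(hgen word set \<Rightarrow> int) \<Rightarrow> (hgen + hgen) \<times> bool \<Rightarrow> hgen word set \<times> int \<Rightarrow> hgen word set \<times> int" where
  "letter_action \<beta> (Inl y, b) (x, n) = (hig_class [(y, b)] \<otimes>\<^bsub>Hig\<^esub> x, n)"
| "letter_action \<beta> (Inr y, b) (x, n) =
    (hig_class [(y, b)] \<otimes>\<^bsub>Hig\<^esub> x, n + \<beta> x - \<beta> (hig_class [(y, b)] \<otimes>\<^bsub>Hig\<^esub> x))"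

primrec word_action ::
  "(hgen word set \<Rightarrow> int) \<Rightarrow> (hgen + hgen) word \<Rightarrow> hgen word set \<times> int \<Rightarrow> hgen word set \<times> int" where
  "word_action \<beta> [] = id"
| "word_action \<beta> (l # w) = letter_action \<beta> l \<circ> word_action \<beta> w"

definition shift :: "int \<Rightarrow> 'a \<times> int \<Rightarrow> 'a \<times> int" where
  "shift j p = (fst p, snd p + j)"

lemma shift_shift [simp]: "shift i (shift j p) = shift (i + j) p"
  by (simp add: shift_def algebra_simps)

lemma shift_zero [simp]: "shift 0 p = p"
  by (simp add: shift_def)

lemma word_action_append: "word_action \<beta> (u @ v) = word_action \<beta> u \<circ> word_action \<beta> v"
  by (induction u) auto

lemma word_action_Inl:
  "x \<in> carrier Hig \<Longrightarrow> word_action \<beta> (map_word Inl u) (x, n) = (hig_class u \<otimes>\<^bsub>Hig\<^esub> x, n)"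
proof (induction u arbitrary: x n)
  case Nil
  then show ?case by (simp add: one_Hig[symmetric] group.is_monoid[OF group_Hig])
next
  case (Cons l u)
  obtain y b where l: "l = (y, b)" by force
  have "hig_class (l # u) \<otimes>\<^bsub>Hig\<^esub> x = hig_class [l] \<otimes>\<^bsub>Hig\<^esub> (hig_class u \<otimes>\<^bsub>Hig\<^esub> x)"
    using monoid.m_assoc[OF group.is_monoid[OF group_Hig] hig_class_carrier[of "[l]"]
        hig_class_carrier[of u] Cons.prems]
    by (simp add: mult_Hig)
  then show ?case using Cons l by simp
qed

lemma word_action_Inr:
  "x \<in> carrier Hig \<Longrightarrow> word_action \<beta> (map_word Inr u) (x, n) =
    (hig_class u \<otimes>\<^bsub>Hig\<^esub> x, n + \<beta> x - \<beta> (hig_class u \<otimes>\<^bsub>Hig\<^esub> x))"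
proof (induction u arbitrary: x n)
  case Nil
  then show ?case by (simp add: one_Hig[symmetric] group.is_monoid[OF group_Hig])
next
  case (Cons l u)
  obtain y b where l: "l = (y, b)" by force
  have "hig_class (l # u) \<otimes>\<^bsub>Hig\<^esub> x = hig_class [l] \<otimes>\<^bsub>Hig\<^esub> (hig_class u \<otimes>\<^bsub>Hig\<^esub> x)"
    using monoid.m_assoc[OF group.is_monoid[OF group_Hig] hig_class_carrier[of "[l]"]
        hig_class_carrier[of u] Cons.prems]
    by (simp add: mult_Hig)
  then show ?case using Cons l by simp
qed

lemma word_action_translation:
  assumes "x \<in> carrier Hig"
  obtains y d where "y \<in> carrier Hig" "\<And>n. word_action \<beta> w (x, n) = (y, n + d)"
  using assms
proof (induction w arbitrary: thesis)
  case Nil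
  show ?case using Nil(1)[of x 0] Nil(2) by simp
next
  case (Cons l w)
  obtain y d where y: "y \<in> carrier Hig" "\<And>n. word_action \<beta> w (x, n) = (y, n + d)"
    using Cons.IH Cons.prems(2) by blast
  obtain a b where l: "l = (a, b)" by force
  show ?case
  proof (cases a)
    case (Inl c)
    then show ?thesis
      using Cons.prems(1)[of "hig_class [(c, b)] \<otimes>\<^bsub>Hig\<^esub> y" d] y l
        monoid.m_closed[OF group.is_monoid[OF group_Hig] hig_class_carrier y(1)]
      by simp
  next
    case (Inr c)
    let ?y' = "hig_class [(c, b)] \<otimes>\<^bsub>Hig\<^esub> y"
    show ?thesis
      using Cons.prems(1)[of ?y' "d + \<beta> y - \<beta> ?y'"] y l Inr
        monoid.m_closed[OF group.is_monoid[OF group_Hig] hig_class_carrier y(1)]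
      by (simp add: algebra_simps)
  qed
qed

lemma word_action_carrier: "x \<in> carrier Hig \<Longrightarrow> fst (word_action \<beta> w (x, n)) \<in> carrier Hig"
  by (rule word_action_translation[of x \<beta> w]) auto

lemma word_action_shift:
  "x \<in> carrier Hig \<Longrightarrow> word_action \<beta> w (shift j (x, n)) = shift j (word_action \<beta> w (x, n))"
  by (rule word_action_translation[of x \<beta> w]) (auto simp: shift_def algebra_simps)

lemma letter_action_cancel:
  assumes "x \<in> carrier Hig"
  shows "letter_action \<beta> (a, b) (letter_action \<beta> (a, \<not> b) (x, n)) = (x, n)"
proof -
  obtain y where a: "a = Inl y \<or> a = Inr y" by (cases a) auto
  have "hig_class [(y, b)] \<otimes>\<^bsub>Hig\<^esub> hig_class [(y, \<not> b)] = \<one>\<^bsub>Hig\<^esub>"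
    using pres_eq.cancel[of hig_rels "[]" y b "[]"] by (simp add: mult_Hig one_Hig pres_class_eq_iff)
  then have "hig_class [(y, b)] \<otimes>\<^bsub>Hig\<^esub> (hig_class [(y, \<not> b)] \<otimes>\<^bsub>Hig\<^esub> x) = x"
    using assms by (simp add: group.is_monoid[OF group_Hig] monoid.m_assoc[symmetric])
  then show ?thesis using a by auto
qed

lemma word_action_copy_cong:
  assumes "f = Inl \<or> f = Inr" "pres_eq hig_rels u v" "x \<in> carrier Hig"
  shows "word_action \<beta> (map_word f u) (x, n) = word_action \<beta> (map_word f v) (x, n)"
proof -
  have "hig_class u = hig_class v" using assms(2) by (simp add: pres_class_eq_iff)
  then show ?thesis using assms(1,3) by (auto simp: word_action_Inl word_action_Inr)
qed

lemma kam_class_copy_cong: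
  assumes "f = Inl \<or> f = Inr" "pres_eq hig_rels u v"
  shows "kam_class z (map_word f u) = kam_class z (map_word f v)"
proof -
  have "map_word f r \<in> amalg_rels z" if "r \<in> hig_rels" for r
    using assms(1) that by (auto simp: amalg_rels_eq)
  then show ?thesis using pres_eq_map_word assms(2) by (metis pres_class_eq_iff)
qed

lemma word_action_inv_word:
  assumes "x \<in> carrier Hig"
  shows "word_action \<beta> w (word_action \<beta> (inv_word w) (x, n)) = (x, n)"
  using assms
proof (induction w arbitrary: x n)
  case (Cons l w)
  obtain a b where l: "l = (a, b)" by force
  obtain y m where ym: "letter_action \<beta> (a, \<not> b) (x, n) = (y, m)" by force
  have y: "y \<in> carrier Hig"
    using word_action_carrier[OF Cons.prems, of \<beta> "[(a, \<not> b)]" n] ym by simp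
  have "inv_word (l # w) = inv_word w @ [(a, \<not> b)]" using l by (simp add: inv_word_def)
  then show ?case
    using Cons.IH[OF y, of m] ym letter_action_cancel[OF Cons.prems, of \<beta> a b n] l
    by (simp add: word_action_append)
qed simp

locale amalgam_translation =
  fixes z :: "hgen word set" and \<beta> :: "hgen word set \<Rightarrow> int"
  assumes z_carrier: "z \<in> carrier Hig"
    and \<beta>_shift: "\<And>x. x \<in> carrier Hig \<Longrightarrow> \<beta> (z \<otimes>\<^bsub>Hig\<^esub> x) = \<beta> x + 1"
begin

lemma word_action_amalg_relator:
  assumes "x \<in> carrier Hig"
  shows "word_action \<beta> (map_word Inl (pres_rep z)) (x, n) =
    shift 1 (word_action \<beta> (map_word Inr (pres_rep z)) (x, n))"
  using assms z_carrier \<beta>_shift[OF assms]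
  by (simp add: word_action_Inl word_action_Inr hig_class_pres_rep shift_def)

lemma word_action_relator:
  assumes "r \<in> amalg_rels z"
  shows "\<exists>j. \<forall>x\<in>carrier Hig. \<forall>n. word_action \<beta> r (x, n) = shift j (x, n)"
proof -
  consider (copy) f r' where "f = Inl \<or> f = Inr" "r' \<in> hig_rels" "r = map_word f r'"
    | (amalg) "r = map_word Inl (pres_rep z) @ inv_word (map_word Inr (pres_rep z))"
    using assms by (auto simp: amalg_rels_eq inv_word_map_word)
  then show ?thesis
  proof cases
    case copy
    then have "word_action \<beta> r (x, n) = (x, n)" if "x \<in> carrier Hig" for x n
      using word_action_copy_cong[OF copy(1) pres_eq.relator[OF copy(2), of "[]" "[]"] that, of \<beta> n]
        word_action_Inl[OF that] that
      by (simp add: one_Hig[symmetric] group.is_monoid[OF group_Hig])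
    then show ?thesis by (intro exI[of _ 0]) simp
  next
    case amalg
    let ?w = "pres_rep z"
    have "word_action \<beta> r (x, n) = shift 1 (x, n)" if x: "x \<in> carrier Hig" for x n
    proof -
      let ?p = "word_action \<beta> (inv_word (map_word Inr ?w)) (x, n)"
      have p: "fst ?p \<in> carrier Hig" using word_action_carrier[OF x] .
      have "word_action \<beta> (map_word Inr ?w) ?p = (x, n)"
        by (rule word_action_inv_word[OF x])
      then show ?thesis
        using word_action_amalg_relator[OF p, of "snd ?p"] amalg
        by (simp add: word_action_append)
    qed
    then show ?thesis by blast
  qed
qed

lemma word_action_pres_eq:
  assumes "pres_eq (amalg_rels z) u v"
  shows "\<exists>j. \<forall>x\<in>carrier Hig. \<forall>n. word_action \<beta> u (x, n) = shift j (word_action \<beta> v (x, n))"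
  using assms
proof (induction rule: pres_eq.induct)
  case (refl w)
  show ?case by (intro exI[of _ 0]) simp
next
  case (sym u v)
  then obtain j where "\<forall>x\<in>carrier Hig. \<forall>n. word_action \<beta> u (x, n) = shift j (word_action \<beta> v (x, n))"
    by blast
  then show ?case by (intro exI[of _ "- j"]) simp
next
  case (trans u v w)
  then obtain i j where "\<forall>x\<in>carrier Hig. \<forall>n. word_action \<beta> u (x, n) = shift i (word_action \<beta> v (x, n))"
    "\<forall>x\<in>carrier Hig. \<forall>n. word_action \<beta> v (x, n) = shift j (word_action \<beta> w (x, n))"
    by blast
  then show ?case by (intro exI[of _ "i + j"]) simp
next
  case (cancel u a b v)
  have "word_action \<beta> [(a, b), (a, \<not> b)] p = p" if "fst p \<in> carrier Hig" for p
    using letter_action_cancel[OF that, of \<beta> a b "snd p"] by simp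
  then show ?case
    by (intro exI[of _ 0]) (simp add: word_action_append word_action_carrier)
next
  case (relator r u v)
  obtain j where j: "\<forall>x\<in>carrier Hig. \<forall>n. word_action \<beta> r (x, n) = shift j (x, n)"
    using word_action_relator[OF relator] by blast
  have "word_action \<beta> (u @ r @ v) (x, n) = shift j (word_action \<beta> (u @ v) (x, n))"
    if x: "x \<in> carrier Hig" for x n
  proof -
    obtain y m where ym: "word_action \<beta> v (x, n) = (y, m)" by force
    have y: "y \<in> carrier Hig" using word_action_carrier[OF x, of \<beta> v n] ym by simp
    show ?thesis using j y ym word_action_shift[OF y] by (simp add: word_action_append)
  qed
  then show ?case by blast
qed

text \<open>The shift is read off at \<open>(\<one>, 0)\<close>; by \<open>word_action_defect\<close> it is the same at every point.\<close>

definition word_defect :: "(hgen + hgen) word \<Rightarrow> int" where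
  "word_defect u = snd (word_action \<beta> u (\<one>\<^bsub>Hig\<^esub>, 0))
     - snd (word_action \<beta> (pres_rep (kam_class z u)) (\<one>\<^bsub>Hig\<^esub>, 0))"

definition defect_cocycle :: "(hgen + hgen) word set \<Rightarrow> (hgen + hgen) word set \<Rightarrow> int" where
  "defect_cocycle g h = word_defect (pres_rep g @ pres_rep h)"

lemma word_defect_eqI:
  assumes "\<And>x n. x \<in> carrier Hig \<Longrightarrow>
    word_action \<beta> u (x, n) = shift j (word_action \<beta> (pres_rep (kam_class z u)) (x, n))"
  shows "word_defect u = j"
  using assms[of "\<one>\<^bsub>Hig\<^esub>" 0] group.is_monoid[OF group_Hig]
  by (simp add: word_defect_def shift_def)

lemma word_action_defect:
  assumes "x \<in> carrier Hig"
  shows "word_action \<beta> u (x, n) = shift (word_defect u) (word_action \<beta> (pres_rep (kam_class z u)) (x, n))"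
proof -
  obtain j where j: "\<forall>x\<in>carrier Hig. \<forall>n.
      word_action \<beta> u (x, n) = shift j (word_action \<beta> (pres_rep (kam_class z u)) (x, n))"
    using word_action_pres_eq[OF pres_eq_pres_rep] by blast
  then have "word_defect u = j" by (intro word_defect_eqI) blast
  then show ?thesis using j assms by simp
qed

lemma word_defect_pres_rep: "word_defect (pres_rep (kam_class z u)) = 0"
  by (rule word_defect_eqI) (simp add: pres_class_rep)

lemma word_defect_append:
  "word_defect (u @ v) = word_defect u + word_defect v + defect_cocycle (kam_class z u) (kam_class z v)"
proof (rule word_defect_eqI)
  fix x n
  assume x: "x \<in> carrier Hig"
  let ?a = "pres_rep (kam_class z u)" and ?b = "pres_rep (kam_class z v)"
  obtain y m where ym: "word_action \<beta> ?b (x, n) = (y, m)" by force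
  have y: "y \<in> carrier Hig" using word_action_carrier[OF x, of \<beta> ?b n] ym by simp
  have ab: "kam_class z (?a @ ?b) = kam_class z (u @ v)"
    by (simp only: mult_Kam[symmetric] pres_class_rep)
  have "word_action \<beta> (u @ v) (x, n) = word_action \<beta> u (word_action \<beta> v (x, n))"
    by (simp add: word_action_append)
  also have "\<dots> = shift (word_defect v + word_defect u) (word_action \<beta> (?a @ ?b) (x, n))"
    using word_action_defect[OF x, of v] word_action_defect[OF y, of u] ym word_action_shift[OF y]
    by (simp add: word_action_append)
  also have "\<dots> = shift (word_defect v + word_defect u + defect_cocycle (kam_class z u) (kam_class z v))
      (word_action \<beta> (pres_rep (kam_class z (u @ v))) (x, n))"
    using word_action_defect[OF x, of "?a @ ?b"] by (simp add: ab defect_cocycle_def add.assoc)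
  finally show "word_action \<beta> (u @ v) (x, n) = shift (word_defect u + word_defect v
      + defect_cocycle (kam_class z u) (kam_class z v)) (word_action \<beta> (pres_rep (kam_class z (u @ v))) (x, n))"
    by (simp add: add.commute)
qed

lemma cocycle_defect_cocycle: "cocycle2 (Kam z) defect_cocycle"
  unfolding cocycle2_def
proof (intro ballI)
  fix g h k
  assume "g \<in> carrier (Kam z)" "h \<in> carrier (Kam z)" "k \<in> carrier (Kam z)"
  then have rep: "kam_class z (pres_rep g) = g" "kam_class z (pres_rep h) = h" "kam_class z (pres_rep k) = k"
    by (auto simp: carrier_Kam pres_class_rep)
  have zero: "word_defect (pres_rep g) = 0" "word_defect (pres_rep h) = 0" "word_defect (pres_rep k) = 0"
    using word_defect_pres_rep rep by metis+
  have "word_defect ((pres_rep g @ pres_rep h) @ pres_rep k) = word_defect (pres_rep g @ (pres_rep h @ pres_rep k))"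
    by simp
  then show "defect_cocycle g h + defect_cocycle (g \<otimes>\<^bsub>Kam z\<^esub> h) k
      = defect_cocycle h k + defect_cocycle g (h \<otimes>\<^bsub>Kam z\<^esub> k)"
    unfolding word_defect_append using zero rep
    by (simp add: mult_Kam[symmetric] defect_cocycle_def)
qed

lemma word_defect_copy_cong:
  assumes "f = Inl \<or> f = Inr" "pres_eq hig_rels u v"
  shows "word_defect (map_word f u) = word_defect (map_word f v)"
proof (rule word_defect_eqI)
  fix x n
  assume "x \<in> carrier Hig"
  then show "word_action \<beta> (map_word f u) (x, n) =
      shift (word_defect (map_word f v)) (word_action \<beta> (pres_rep (kam_class z (map_word f u))) (x, n))"
    using word_action_copy_cong[OF assms] word_action_defect kam_class_copy_cong[OF assms] by metis
qed

lemma kam_class_amalg: "kam_class z (map_word Inl (pres_rep z)) = kam_class z (map_word Inr (pres_rep z))"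
proof -
  interpret K: group "Kam z" by (rule group_Kam)
  let ?a = "kam_class z (map_word Inl (pres_rep z))" and ?b = "kam_class z (map_word Inr (pres_rep z))"
  have "kam_class z (map_word Inl (pres_rep z) @ map_word Inr (inv_word (pres_rep z))) = kam_class z []"
    by (rule pres_class_relator) (simp add: amalg_rels_eq)
  then have "?a \<otimes>\<^bsub>Kam z\<^esub> inv\<^bsub>Kam z\<^esub> ?b = \<one>\<^bsub>Kam z\<^esub>"
    by (simp add: inv_Kam inv_word_map_word mult_Kam one_Kam)
  then have "?a \<otimes>\<^bsub>Kam z\<^esub> inv\<^bsub>Kam z\<^esub> ?b \<otimes>\<^bsub>Kam z\<^esub> ?b = ?b" by simp
  then show ?thesis by (simp add: K.m_assoc)
qed

lemma word_defect_amalg: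
  "word_defect (map_word Inl (pres_rep z)) = 1 + word_defect (map_word Inr (pres_rep z))"
proof (rule word_defect_eqI)
  fix x n
  assume x: "x \<in> carrier Hig"
  then show "word_action \<beta> (map_word Inl (pres_rep z)) (x, n) = shift (1 + word_defect (map_word Inr (pres_rep z)))
      (word_action \<beta> (pres_rep (kam_class z (map_word Inl (pres_rep z)))) (x, n))"
    using word_action_amalg_relator[OF x, of n] word_action_defect[OF x, of "map_word Inr (pres_rep z)" n]
    by (simp add: kam_class_amalg)
qed

lemma copy_defect_trivial:
  assumes \<psi>: "\<And>g h. g \<in> carrier (Kam z) \<Longrightarrow> h \<in> carrier (Kam z) \<Longrightarrow>
      k * defect_cocycle g h = \<psi> g + \<psi> h - \<psi> (g \<otimes>\<^bsub>Kam z\<^esub> h)"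
    and f: "f = Inl \<or> f = Inr"
  shows "k * word_defect (map_word f w) + \<psi> (kam_class z (map_word f w)) = 0"
proof (rule pres_word_additive_zero[OF perfect_Hig[unfolded Hig_def]])
  fix u v
  show "k * word_defect (map_word f (u @ v)) + \<psi> (kam_class z (map_word f (u @ v))) =
      k * word_defect (map_word f u) + \<psi> (kam_class z (map_word f u))
      + (k * word_defect (map_word f v) + \<psi> (kam_class z (map_word f v)))"
    using \<psi>[of "kam_class z (map_word f u)" "kam_class z (map_word f v)"]
    by (simp add: map_word_append word_defect_append mult_Kam algebra_simps)
next
  fix u v
  assume "pres_eq hig_rels u v"
  then show "k * word_defect (map_word f u) + \<psi> (kam_class z (map_word f u)) =
      k * word_defect (map_word f v) + \<psi> (kam_class z (map_word f v))"
    using word_defect_copy_cong[OF f] kam_class_copy_cong[OF f] by simp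
qed

theorem infinite_order_defect_cocycle: "infinite_order_class (Kam z) defect_cocycle"
  unfolding infinite_order_class_def
proof (intro allI impI notI)
  fix k :: int
  assume "k \<noteq> 0" and "coboundary2 (Kam z) (\<lambda>g h. k * defect_cocycle g h)"
  then obtain \<psi> where \<psi>: "\<And>g h. g \<in> carrier (Kam z) \<Longrightarrow> h \<in> carrier (Kam z) \<Longrightarrow>
      k * defect_cocycle g h = \<psi> g + \<psi> h - \<psi> (g \<otimes>\<^bsub>Kam z\<^esub> h)"
    unfolding coboundary2_def by blast
  have "k * (1 + word_defect (map_word Inr (pres_rep z))) + \<psi> (kam_class z (map_word Inr (pres_rep z))) = 0"
    using copy_defect_trivial[OF \<psi>, of Inl "pres_rep z"] by (simp add: word_defect_amalg kam_class_amalg)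
  moreover have "k * word_defect (map_word Inr (pres_rep z)) + \<psi> (kam_class z (map_word Inr (pres_rep z))) = 0"
    using copy_defect_trivial[OF \<psi>, of Inr "pres_rep z"] by simp
  ultimately show False using \<open>k \<noteq> 0\<close> unfolding distrib_left by linarith
qed

end

lemma comm_group_Z2: "comm_group Z2"
proof (rule comm_groupI)
  fix x :: "int \<times> int"
  show "\<exists>y\<in>carrier Z2. y \<otimes>\<^bsub>Z2\<^esub> x = \<one>\<^bsub>Z2\<^esub>"
    by (rule bexI[of _ "(- fst x, - snd x)"]) (cases x, auto simp: Z2_def)
qed (auto simp: Z2_def)

theorem theorem4p3:
  fixes z :: "hgen word set"
    and fK :: "(hgen + hgen) word set \<Rightarrow> (hgen + hgen) word set \<Rightarrow> int"
    and fN :: "int \<times> int \<Rightarrow> int \<times> int \<Rightarrow> int"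
    and H :: "((int \<times> (int \<times> int)) \<times> (int \<times> (hgen + hgen) word set)) set set"
  assumes "z \<in> carrier Hig"
    and "\<forall>n::int. n \<noteq> 0 \<longrightarrow> z [^]\<^bsub>Hig\<^esub> n \<noteq> \<one>\<^bsub>Hig\<^esub>"
    and "H2_generator (Kam z) fK"
    and "H2_generator Z2 fN"
    and "subgroup H (Ggrp z fK fN)"
    and "p_map ` H = carrier (Kam z)"
  shows "e_elem z fK fN \<in> H"
proof -
  obtain \<beta> :: "hgen word set \<Rightarrow> int" where "\<And>x. x \<in> carrier Hig \<Longrightarrow> \<beta> (z \<otimes>\<^bsub>Hig\<^esub> x) = \<beta> x + 1"
    using group.translation_number_exists[OF group_Hig assms(1)] assms(2) by blast
  then interpret amalgam_translation z \<beta>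
    using assms(1) by unfold_locales
  have "central_product Z2 fN (Kam z) fK"
    using comm_group_Z2 group_Kam assms(3,4) by (intro central_product.intro) (simp_all add: H2_generator_def)
  then interpret central_product Z2 fN "Kam z" fK .
  have "diagZ z fK fN = central_diag Z2 fN (Kam z) fK"
    by (simp only: diagZ_def central_diag_def)
  then show ?thesis
    using central_generator_mem[OF perfect_Kam assms(3) infinite_order_class_of_generator[OF assms(3)
        cocycle_defect_cocycle infinite_order_defect_cocycle]] assms(5,6)
    unfolding e_elem_def Ggrp_def NL_def by simp
qed

end
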